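(* For every $d\ge2$, every $A\in\mathcal C^{d-1}$ and every $a\in[0,\tfrac12]$, $$\max_{C\in\mathcal C^d_A}\mu_A\Big(\big\{\mathbf x\in\mathbb I^{d-1}: |r_C(\mathbf x)-\tfrac12|\ge a\big\}\Big)=\min\{1,\,2-4a\}.$$
   Context: $\mathbb I=[0,1]$, $\lambda$ Lebesgue measure. A $d$-copula $C\in\mathcal C^d$ is the distribution function on $\mathbb I^d$ of a probability measure $\mu_C$ with uniform univariate marginals; points are $(\mathbf x,y)$, $\mathbf x\in\mathbb I^{d-1}$. $C_{1:(d-1)}$ is the marginal copula of the first $d-1$ coordinates. For $A\in\mathcal C^{d-1}$, $\mathcal C^d_A=\{C\in\mathcal C^d: C_{1:(d-1)}=A\}$; for $d=2$, $\mu_A=\lambda$ and $\mathcal C^2_A=\mathcal C^2$. $K_C$ is the Markov kernel of $C$ w.r.t. the first $d-1$ coordinates: $\mu_C(B\times F)=\int_B K_C(\mathbf x,F)\,\mathrm d\mu_{C_{1:(d-1)}}(\mathbf x)$. Regression function $r_C(\mathbf x)=\int y\,K_C(\mathbf x,\mathrm dy)$. *)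

theory Defs
  imports "HOL-Probability.Probability"
begin

text \<open>Points of \<open>\<I>\<^sup>n\<close> are represented as functions \<open>nat \<Rightarrow> real\<close>, coordinates indexed by \<open>{..<n}\<close>
  (extensional, as in the product measure \<open>PiM\<close>). A copula is identified with its probability
  measure \<open>\<mu>\<^sub>C\<close> (the copula being its distribution function).\<close>

definition cube_space :: "nat \<Rightarrow> (nat \<Rightarrow> real) measure" where
  "cube_space n = PiM {..<n} (\<lambda>_. borel)"

definition is_copula :: "nat \<Rightarrow> (nat \<Rightarrow> real) measure \<Rightarrow> bool" where
  "is_copula n M \<longleftrightarrow> sets M = sets (cube_space n) \<and> prob_space M \<and>
     (\<forall>i<n. distr M borel (\<lambda>z. z i) = uniform_measure lborel {0..1})"

definition marg_first :: "nat \<Rightarrow> (nat \<Rightarrow> real) measure \<Rightarrow> (nat \<Rightarrow> real) measure" where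
  "marg_first d C = distr C (cube_space (d - 1)) (\<lambda>z. restrict z {..<d - 1})"

definition is_markov_kernel :: "nat \<Rightarrow> (nat \<Rightarrow> real) measure \<Rightarrow> ((nat \<Rightarrow> real) \<Rightarrow> real measure) \<Rightarrow> bool" where
  "is_markov_kernel d C K \<longleftrightarrow>
     K \<in> measurable (cube_space (d - 1)) (prob_algebra borel) \<and>
     (\<forall>B\<in>sets (cube_space (d - 1)). \<forall>F\<in>sets borel.
        emeasure C {z\<in>space C. restrict z {..<d - 1} \<in> B \<and> z (d - 1) \<in> F}
        = (\<integral>\<^sup>+ x\<in>B. emeasure (K x) F \<partial>(marg_first d C)))"

definition regression :: "((nat \<Rightarrow> real) \<Rightarrow> real measure) \<Rightarrow> (nat \<Rightarrow> real) \<Rightarrow> real" where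
  "regression K x = (\<integral> y. y \<partial>(K x))"

end

theory Submission
  imports Defs
begin

text \<open>If \<open>Y\<close> is uniform on \<open>[0,1]\<close> and an event \<open>G\<close> has probability \<open>p\<close>, then
  \<open>E[Y; G] \<le> p - p\<^sup>2/2\<close>, the value attained by \<open>G = {Y \<ge> 1 - p}\<close>. Disintegrating \<open>\<mu>\<^sub>C\<close> along
  the first \<open>d - 1\<close> coordinates \<open>X\<close> and taking \<open>G = {r\<^sub>C(X) \<ge> 1/2 + a}\<close> gives
  \<open>(1/2 + a) p \<le> p - p\<^sup>2/2\<close>, i.e. \<open>p \<le> 1 - 2a\<close>; the same argument with \<open>1 - Y\<close> bounds
  \<open>{r\<^sub>C(X) \<le> 1/2 - a}\<close>, so the set in question has mass at most \<open>2 - 4a\<close>.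

  For sharpness put \<open>p = min (1/2) (1 - 2a)\<close> and let the kernel depend only on the first
  coordinate \<open>t\<close>: uniform on \<open>[1 - p, 1]\<close> for \<open>t < p\<close>, on \<open>[0, p]\<close> for \<open>p \<le> t < 2p\<close>, and on
  \<open>[p, 1 - p]\<close> otherwise. These three blocks tile \<open>[0,1]\<close> in proportion to the
  probabilities of the three cases, so the last coordinate stays uniform, and the regression
  function deviates from \<open>1/2\<close> by at least \<open>a\<close> exactly when \<open>t < 2p\<close>.\<close>

section \<open>Uniform distributions on intervals\<close>

lemma nn_integral_uniform_measure_Icc_id:
  fixes l h :: real assumes "0 \<le> l" "l < h"
  shows "(\<integral>\<^sup>+ y. ennreal y \<partial>uniform_measure lborel {l..h}) = ennreal ((l + h) / 2)"
proof -
  have "(\<integral>\<^sup>+ y. ennreal y \<partial>uniform_measure lborel {l..h}) =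
      (\<integral>\<^sup>+ y. ennreal y * indicator {l..h} y \<partial>lborel) / emeasure lborel {l..h}"
    by (rule nn_integral_uniform_measure) auto
  also have "(\<integral>\<^sup>+ y. ennreal y * indicator {l..h} y \<partial>lborel) = ennreal (h\<^sup>2/2 - l\<^sup>2/2)"
    by (rule nn_integral_FTC_Icc[where F="\<lambda>y. y\<^sup>2/2"])
      (use assms in \<open>auto intro!: derivative_eq_intros\<close>)
  also have "emeasure lborel {l..h} = ennreal (h - l)"
    using assms by simp
  also have "ennreal (h\<^sup>2/2 - l\<^sup>2/2) / ennreal (h - l) = ennreal ((h\<^sup>2/2 - l\<^sup>2/2) / (h - l))"
    using assms by (intro divide_ennreal) auto
  also have "(h\<^sup>2/2 - l\<^sup>2/2) / (h - l) = (l + h) / 2"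
    using assms by (simp add: field_simps power2_eq_square)
  finally show ?thesis .
qed

lemma integral_uniform_measure_Icc_id:
  fixes l h :: real assumes "0 \<le> l" "l < h"
  shows "(\<integral> y. y \<partial>uniform_measure lborel {l..h}) = (l + h) / 2"
proof -
  have "(\<integral> y. y \<partial>uniform_measure lborel {l..h}) =
      enn2real (\<integral>\<^sup>+ y. ennreal y \<partial>uniform_measure lborel {l..h})"
    by (rule integral_eq_nn_integral) (use assms in \<open>auto intro!: AE_uniform_measureI\<close>)
  then show ?thesis
    using nn_integral_uniform_measure_Icc_id[OF assms] assms by simp
qed

lemma nn_integral_uniform_measure_01_excess:
  fixes c :: real assumes "0 \<le> c" "c \<le> 1"
  shows "(\<integral>\<^sup>+ y. ennreal (max 0 (y - c)) \<partial>uniform_measure lborel {0..1}) = ennreal ((1 - c)\<^sup>2/2)"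
proof -
  have "(\<integral>\<^sup>+ y. ennreal (max 0 (y - c)) \<partial>uniform_measure lborel {0..1}) =
      (\<integral>\<^sup>+ y. ennreal (max 0 (y - c)) * indicator {0..1} y \<partial>lborel) / emeasure lborel {0..1::real}"
    by (rule nn_integral_uniform_measure) auto
  also have "(\<integral>\<^sup>+ y. ennreal (max 0 (y - c)) * indicator {0..1} y \<partial>lborel) =
      (\<integral>\<^sup>+ y. ennreal (y - c) * indicator {c..1} y \<partial>lborel)"
    using assms by (intro nn_integral_cong) (auto split: split_indicator simp: max_def ennreal_neg)
  also have "\<dots> = ennreal ((1 - c)\<^sup>2/2 - (c - c)\<^sup>2/2)"
    by (rule nn_integral_FTC_Icc[where F="\<lambda>y. (y - c)\<^sup>2/2"])
      (use assms in \<open>auto intro!: derivative_eq_intros\<close>)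
  finally show ?thesis
    by (simp add: divide_ennreal_def)
qed

lemma nn_integral_uniform_measure_01_shortfall:
  fixes c :: real assumes "0 \<le> c" "c \<le> 1"
  shows "(\<integral>\<^sup>+ y. ennreal (max 0 (c - y)) \<partial>uniform_measure lborel {0..1}) = ennreal (c\<^sup>2/2)"
proof -
  have "(\<integral>\<^sup>+ y. ennreal (max 0 (c - y)) \<partial>uniform_measure lborel {0..1}) =
      (\<integral>\<^sup>+ y. ennreal (max 0 (c - y)) * indicator {0..1} y \<partial>lborel) / emeasure lborel {0..1::real}"
    by (rule nn_integral_uniform_measure) auto
  also have "(\<integral>\<^sup>+ y. ennreal (max 0 (c - y)) * indicator {0..1} y \<partial>lborel) =
      (\<integral>\<^sup>+ y. ennreal (c - y) * indicator {0..c} y \<partial>lborel)"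
    using assms by (intro nn_integral_cong) (auto split: split_indicator simp: max_def ennreal_neg)
  also have "\<dots> = ennreal ((c\<^sup>2/2 - (c - c)\<^sup>2/2) - (c\<^sup>2/2 - (c - 0)\<^sup>2/2))"
    by (rule nn_integral_FTC_Icc[where F="\<lambda>y. c\<^sup>2/2 - (c - y)\<^sup>2/2"])
      (use assms in \<open>auto intro!: derivative_eq_intros simp: field_simps\<close>)
  finally show ?thesis
    by (simp add: divide_ennreal_def)
qed

lemma nn_integral_indicator_le_threshold:
  fixes f :: "'a \<Rightarrow> real"
  assumes [measurable]: "f \<in> borel_measurable M" "G \<in> sets M" and "0 \<le> t"
  shows "(\<integral>\<^sup>+ z. indicator G z * ennreal (f z) \<partial>M)
    \<le> ennreal t * emeasure M G + (\<integral>\<^sup>+ z. ennreal (max 0 (f z - t)) \<partial>M)"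
proof -
  have "(\<integral>\<^sup>+ z. indicator G z * ennreal (f z) \<partial>M)
      \<le> (\<integral>\<^sup>+ z. ennreal t * indicator G z + ennreal (max 0 (f z - t)) \<partial>M)"
  proof (intro nn_integral_mono)
    fix z
    have "ennreal (f z) \<le> ennreal (t + max 0 (f z - t))"
      by (intro ennreal_leI) auto
    also have "\<dots> = ennreal t + ennreal (max 0 (f z - t))"
      using \<open>0 \<le> t\<close> by (intro ennreal_plus) auto
    finally show "indicator G z * ennreal (f z) \<le> ennreal t * indicator G z + ennreal (max 0 (f z - t))"
      by (auto split: split_indicator)
  qed
  also have "\<dots> = ennreal t * emeasure M G + (\<integral>\<^sup>+ z. ennreal (max 0 (f z - t)) \<partial>M)"
    by (subst nn_integral_add) (auto simp: nn_integral_cmult_indicator)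
  finally show ?thesis .
qed

lemma (in prob_space) nn_integral_indicator_uniform_01_le:
  assumes Y[measurable]: "Y \<in> borel_measurable M" and G[measurable]: "G \<in> events"
    and uniform: "distr M borel Y = uniform_measure lborel {0..1}"
  shows "(\<integral>\<^sup>+ z. indicator G z * ennreal (Y z) \<partial>M) \<le> ennreal (prob G - (prob G)\<^sup>2/2)"
    and "(\<integral>\<^sup>+ z. indicator G z * ennreal (1 - Y z) \<partial>M) \<le> ennreal (prob G - (prob G)\<^sup>2/2)"
proof -
  define p where "p = prob G"
  have p: "0 \<le> p" "p \<le> 1"
    unfolding p_def by auto
  have total: "ennreal (1 - p) * emeasure M G + ennreal (p\<^sup>2/2) = ennreal (p - p\<^sup>2/2)"
  proof -
    have "ennreal (1 - p) * emeasure M G = ennreal ((1 - p) * p)"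
      using p by (simp add: p_def emeasure_eq_measure ennreal_mult)
    also have "ennreal ((1 - p) * p) + ennreal (p\<^sup>2/2) = ennreal ((1 - p) * p + p\<^sup>2/2)"
      using p by (intro ennreal_plus[symmetric]) auto
    also have "(1 - p) * p + p\<^sup>2/2 = p - p\<^sup>2/2"
      by (simp add: power2_eq_square algebra_simps)
    finally show ?thesis .
  qed
  have "(\<integral>\<^sup>+ z. ennreal (max 0 (Y z - (1 - p))) \<partial>M)
      = (\<integral>\<^sup>+ y. ennreal (max 0 (y - (1 - p))) \<partial>distr M borel Y)"
    by (subst nn_integral_distr) auto
  also have "\<dots> = ennreal (p\<^sup>2/2)"
    unfolding uniform using p by (subst nn_integral_uniform_measure_01_excess) auto
  finally show "(\<integral>\<^sup>+ z. indicator G z * ennreal (Y z) \<partial>M) \<le> ennreal (prob G - (prob G)\<^sup>2/2)"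
    using nn_integral_indicator_le_threshold[OF Y G, of "1 - p"] p total by (simp add: p_def)
  have "(\<integral>\<^sup>+ z. ennreal (max 0 ((1 - Y z) - (1 - p))) \<partial>M)
      = (\<integral>\<^sup>+ y. ennreal (max 0 (p - y)) \<partial>distr M borel Y)"
    by (subst nn_integral_distr) auto
  also have "\<dots> = ennreal (p\<^sup>2/2)"
    unfolding uniform using p by (subst nn_integral_uniform_measure_01_shortfall) auto
  finally show "(\<integral>\<^sup>+ z. indicator G z * ennreal (1 - Y z) \<partial>M) \<le> ennreal (prob G - (prob G)\<^sup>2/2)"
    using nn_integral_indicator_le_threshold[of "\<lambda>z. 1 - Y z" M G "1 - p"] p total
    by (simp add: p_def)
qed

section \<open>Disintegration along the first coordinates\<close>

lemma space_cube_space: "space (cube_space n) = (\<Pi>\<^sub>E i\<in>{..<n}. UNIV)"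
  by (simp add: cube_space_def space_PiM)

lemma measurable_cube_component:
  assumes "sets M = sets (cube_space n)"
  shows "(\<lambda>z. z i) \<in> M \<rightarrow>\<^sub>M borel"
  unfolding measurable_cong_sets[OF assms refl]
proof (cases "i < n")
  case True
  then show "(\<lambda>z. z i) \<in> cube_space n \<rightarrow>\<^sub>M borel"
    unfolding cube_space_def by (intro measurable_component_singleton) auto
next
  case False
  then have "z i = undefined" if "z \<in> space (cube_space n)" for z :: "nat \<Rightarrow> real"
    using that by (auto simp: space_cube_space PiE_def extensional_def)
  then show "(\<lambda>z. z i) \<in> cube_space n \<rightarrow>\<^sub>M borel"
    by (subst measurable_cong[where g="\<lambda>_. undefined"]) auto
qed

lemma measurable_cube_restrict:
  assumes "sets M = sets (cube_space (Suc n))"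
  shows "(\<lambda>z. restrict z {..<n}) \<in> M \<rightarrow>\<^sub>M cube_space n"
  unfolding measurable_cong_sets[OF assms refl] cube_space_def
  by (intro measurable_restrict_subset) auto

lemma sets_marg_first [simp, measurable_cong]:
  "sets (marg_first (Suc n) C) = sets (cube_space n)"
  by (simp add: marg_first_def)

lemma prob_space_marg_first:
  assumes "prob_space C" "sets C = sets (cube_space (Suc n))"
  shows "prob_space (marg_first (Suc n) C)"
  using prob_space.prob_space_distr[OF assms(1) measurable_cube_restrict[OF assms(2)]]
  by (simp add: marg_first_def)

lemma measure_marg_first:
  assumes "sets C = sets (cube_space (Suc n))" "S \<in> sets (cube_space n)"
  shows "measure (marg_first (Suc n) C) S = measure C {z\<in>space C. restrict z {..<n} \<in> S}"
  using measure_distr[OF measurable_cube_restrict[OF assms(1)] assms(2)]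
  by (simp add: marg_first_def vimage_def Int_def conj_commute)

lemma markov_kernel_measurable:
  assumes "is_markov_kernel (Suc n) C K"
  shows "K \<in> marg_first (Suc n) C \<rightarrow>\<^sub>M prob_algebra borel"
  using assms unfolding measurable_cong_sets[OF sets_marg_first refl]
  by (simp add: is_markov_kernel_def)

lemma markov_kernel_emeasure:
  assumes "is_markov_kernel (Suc n) C K" "B \<in> sets (cube_space n)" "F \<in> sets borel"
  shows "emeasure C {z\<in>space C. restrict z {..<n} \<in> B \<and> z n \<in> F}
    = (\<integral>\<^sup>+ x\<in>B. emeasure (K x) F \<partial>marg_first (Suc n) C)"
  using assms by (simp add: is_markov_kernel_def)

lemma measurable_markov_kernel_density:
  assumes "is_markov_kernel (Suc n) C K"
  shows "K \<in> density (marg_first (Suc n) C) f \<rightarrow>\<^sub>M subprob_algebra borel"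
  using measurable_prob_algebraD[OF markov_kernel_measurable[OF assms]]
  by (simp add: measurable_cong_sets[OF sets_density refl])

lemma distr_last_density_markov_kernel:
  fixes n :: nat and C :: "(nat \<Rightarrow> real) measure" and K :: "(nat \<Rightarrow> real) \<Rightarrow> real measure"
  defines "A \<equiv> marg_first (Suc n) C"
  assumes sets_C: "sets C = sets (cube_space (Suc n))" and K: "is_markov_kernel (Suc n) C K"
    and E[measurable]: "E \<in> sets (cube_space n)"
  shows "distr (density C (\<lambda>z. indicator E (restrict z {..<n}))) borel (\<lambda>z. z n)
    = density A (indicator E) \<bind> K"
proof (rule measure_eqI)
  have [measurable]: "(\<lambda>z. restrict z {..<n}) \<in> C \<rightarrow>\<^sub>M cube_space n"
    by (rule measurable_cube_restrict[OF sets_C])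
  have [measurable]: "(\<lambda>z. z n) \<in> C \<rightarrow>\<^sub>M borel"
    by (rule measurable_cube_component[OF sets_C])
  have E_A[measurable]: "E \<in> sets A"
    by (simp add: A_def)
  have K_E: "K \<in> density A (indicator E) \<rightarrow>\<^sub>M subprob_algebra borel"
    unfolding A_def by (rule measurable_markov_kernel_density[OF K])
  have nonempty: "space (density A (indicator E)) \<noteq> {}"
    by (simp add: A_def marg_first_def space_cube_space PiE_eq_empty_iff)
  show "sets (distr (density C (\<lambda>z. indicator E (restrict z {..<n}))) borel (\<lambda>z. z n))
      = sets (density A (indicator E) \<bind> K)"
    using sets_bind[OF sets_kernel[OF K_E] nonempty] by simp
  fix F assume "F \<in> sets (distr (density C (\<lambda>z. indicator E (restrict z {..<n}))) borel (\<lambda>z. z n))"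
  then have F[measurable]: "F \<in> sets borel"
    by simp
  have "emeasure (distr (density C (\<lambda>z. indicator E (restrict z {..<n}))) borel (\<lambda>z. z n)) F
      = (\<integral>\<^sup>+ z. indicator E (restrict z {..<n}) * indicator ((\<lambda>z. z n) -` F \<inter> space C) z \<partial>C)"
    by (simp add: emeasure_distr emeasure_density)
  also have "\<dots> = (\<integral>\<^sup>+ z. indicator {z\<in>space C. restrict z {..<n} \<in> E \<and> z n \<in> F} z \<partial>C)"
    by (intro nn_integral_cong) (auto split: split_indicator)
  also have "\<dots> = emeasure C {z\<in>space C. restrict z {..<n} \<in> E \<and> z n \<in> F}"
    by (intro nn_integral_indicator) measurable
  also have "\<dots> = (\<integral>\<^sup>+ x\<in>E. emeasure (K x) F \<partial>A)"
    unfolding A_def by (rule markov_kernel_emeasure[OF K E F])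
  also have "\<dots> = emeasure (density A (indicator E) \<bind> K) F"
    unfolding emeasure_bind[OF nonempty K_E F]
    using measurable_emeasure_kernel[OF K_E F]
    by (subst nn_integral_density) (auto simp: mult.commute)
  finally show "emeasure (distr (density C (\<lambda>z. indicator E (restrict z {..<n}))) borel (\<lambda>z. z n)) F
      = emeasure (density A (indicator E) \<bind> K) F" .
qed

lemma nn_integral_markov_kernel:
  fixes n :: nat and C :: "(nat \<Rightarrow> real) measure" and K :: "(nat \<Rightarrow> real) \<Rightarrow> real measure"
  defines "A \<equiv> marg_first (Suc n) C"
  assumes sets_C: "sets C = sets (cube_space (Suc n))" and K: "is_markov_kernel (Suc n) C K"
    and E[measurable]: "E \<in> sets (cube_space n)" and h[measurable]: "h \<in> borel_measurable borel"
  shows "(\<integral>\<^sup>+ z. indicator E (restrict z {..<n}) * h (z n) \<partial>C)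
    = (\<integral>\<^sup>+ x\<in>E. (\<integral>\<^sup>+ y. h y \<partial>K x) \<partial>A)"
proof -
  have [measurable]: "(\<lambda>z. restrict z {..<n}) \<in> C \<rightarrow>\<^sub>M cube_space n"
    by (rule measurable_cube_restrict[OF sets_C])
  have [measurable]: "(\<lambda>z. z n) \<in> C \<rightarrow>\<^sub>M borel"
    by (rule measurable_cube_component[OF sets_C])
  have [measurable]: "K \<in> A \<rightarrow>\<^sub>M subprob_algebra borel"
    unfolding A_def by (rule measurable_prob_algebraD[OF markov_kernel_measurable[OF K]])
  have [measurable]: "E \<in> sets A"
    by (simp add: A_def)
  have "(\<integral>\<^sup>+ z. indicator E (restrict z {..<n}) * h (z n) \<partial>C)
      = (\<integral>\<^sup>+ y. h y \<partial>distr (density C (\<lambda>z. indicator E (restrict z {..<n}))) borel (\<lambda>z. z n))"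
    by (simp add: nn_integral_density nn_integral_distr)
  also have "\<dots> = (\<integral>\<^sup>+ x. (\<integral>\<^sup>+ y. h y \<partial>K x) \<partial>density A (indicator E))"
    unfolding distr_last_density_markov_kernel[OF sets_C K E, folded A_def]
    by (rule nn_integral_bind[OF h measurable_markov_kernel_density[OF K, folded A_def]])
  also have "\<dots> = (\<integral>\<^sup>+ x\<in>E. (\<integral>\<^sup>+ y. h y \<partial>K x) \<partial>A)"
    by (subst nn_integral_density) (auto simp: mult.commute)
  finally show ?thesis .
qed

section \<open>The upper bound\<close>

lemma measure_marg_first_kernel_mean_ge:
  fixes n :: nat and C :: "(nat \<Rightarrow> real) measure" and K :: "(nat \<Rightarrow> real) \<Rightarrow> real measure"
    and h :: "real \<Rightarrow> real"
  defines "A \<equiv> marg_first (Suc n) C"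
  assumes "prob_space C" and sets_C: "sets C = sets (cube_space (Suc n))"
    and K: "is_markov_kernel (Suc n) C K" and h[measurable]: "h \<in> borel_measurable borel"
    and h_bound: "\<And>G. G \<in> sets C \<Longrightarrow>
      (\<integral>\<^sup>+ z. indicator G z * ennreal (h (z n)) \<partial>C) \<le> ennreal (measure C G - (measure C G)\<^sup>2/2)"
    and S[measurable]: "S \<in> sets (cube_space n)" and c: "0 \<le> c" "c \<le> 1"
    and mean: "AE x in A. x \<in> S \<longrightarrow> ennreal c \<le> (\<integral>\<^sup>+ y. ennreal (h y) \<partial>K x)"
  shows "measure A S \<le> 2 - 2 * c"
proof -
  interpret C: prob_space C by fact
  have X[measurable]: "(\<lambda>z. restrict z {..<n}) \<in> C \<rightarrow>\<^sub>M cube_space n"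
    by (rule measurable_cube_restrict[OF sets_C])
  have Y[measurable]: "(\<lambda>z. z n) \<in> C \<rightarrow>\<^sub>M borel"
    by (rule measurable_cube_component[OF sets_C])
  have K_A[measurable]: "K \<in> A \<rightarrow>\<^sub>M subprob_algebra borel"
    unfolding A_def by (rule measurable_prob_algebraD[OF markov_kernel_measurable[OF K]])
  interpret A: prob_space A
    unfolding A_def by (rule prob_space_marg_first) fact+
  have S_A[measurable]: "S \<in> sets A"
    by (simp add: A_def)
  define G where "G = {z\<in>space C. restrict z {..<n} \<in> S}"
  have G[measurable]: "G \<in> sets C"
    unfolding G_def by measurable
  define p where "p = measure A S"
  have p: "0 \<le> p" "p \<le> 1" "p = measure C G"
    unfolding p_def by (auto simp: A_def G_def measure_marg_first[OF sets_C S])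
  have "ennreal (c * p) = (\<integral>\<^sup>+ x\<in>S. ennreal c \<partial>A)"
    using c p by (simp add: p_def nn_integral_cmult_indicator A.emeasure_eq_measure ennreal_mult mult.commute)
  also have "\<dots> \<le> (\<integral>\<^sup>+ x\<in>S. (\<integral>\<^sup>+ y. ennreal (h y) \<partial>K x) \<partial>A)"
    using mean by (intro nn_integral_mono_AE) (auto split: split_indicator)
  also have "\<dots> = (\<integral>\<^sup>+ z. indicator G z * ennreal (h (z n)) \<partial>C)"
    unfolding A_def nn_integral_markov_kernel[OF sets_C K S, symmetric, of "\<lambda>y. ennreal (h y)", simplified]
    by (intro nn_integral_cong) (auto simp: G_def split: split_indicator)
  also have "\<dots> \<le> ennreal (p - p\<^sup>2/2)"
    using h_bound[OF G] p by simp
  finally have "ennreal (c * p) \<le> ennreal (p - p\<^sup>2/2)" .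
  moreover have "p\<^sup>2 \<le> p"
    using p(1,2) by (simp add: power2_eq_square mult_left_le)
  ultimately have "c * p \<le> p - p\<^sup>2/2"
    using p(1) ennreal_le_iff[of "p - p\<^sup>2/2" "c * p"] by simp
  then have "0 \<le> p * (1 - p/2 - c)"
    by (simp add: power2_eq_square algebra_simps)
  then have "p = 0 \<or> 0 \<le> 1 - p/2 - c"
    using p(1) by (auto simp: zero_le_mult_iff)
  then show ?thesis
    using c unfolding p_def by auto
qed

text \<open>The kernel may be arbitrary on a null set of the marginal, so it is concentrated on \<open>[0,1]\<close>
  only almost everywhere.\<close>

lemma AE_markov_kernel_unit_interval:
  fixes n :: nat and C :: "(nat \<Rightarrow> real) measure" and K :: "(nat \<Rightarrow> real) \<Rightarrow> real measure"
  assumes C: "is_copula (Suc n) C" and K: "is_markov_kernel (Suc n) C K"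
  shows "AE x in marg_first (Suc n) C. AE y in K x. y \<in> {0..1}"
proof -
  define A where "A = marg_first (Suc n) C"
  define F :: "real set" where "F = - {0..1}"
  have F_borel: "F \<in> sets borel"
    by (simp add: F_def)
  have sets_C: "sets C = sets (cube_space (Suc n))"
    and uniform: "distr C borel (\<lambda>z. z n) = uniform_measure lborel {0..1}"
    using C by (auto simp: is_copula_def)
  have X: "(\<lambda>z. restrict z {..<n}) \<in> C \<rightarrow>\<^sub>M cube_space n"
    by (rule measurable_cube_restrict[OF sets_C])
  have Y: "(\<lambda>z. z n) \<in> C \<rightarrow>\<^sub>M borel"
    by (rule measurable_cube_component[OF sets_C])
  have K_A: "K \<in> A \<rightarrow>\<^sub>M prob_algebra borel"
    unfolding A_def by (rule markov_kernel_measurable[OF K])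
  have "(\<integral>\<^sup>+ x\<in>space (cube_space n). emeasure (K x) F \<partial>A)
      = emeasure C {z\<in>space C. restrict z {..<n} \<in> space (cube_space n) \<and> z n \<in> F}"
    unfolding A_def by (rule markov_kernel_emeasure[OF K sets.top F_borel, symmetric])
  also have "{z\<in>space C. restrict z {..<n} \<in> space (cube_space n) \<and> z n \<in> F} = (\<lambda>z. z n) -` F \<inter> space C"
    using measurable_space[OF X] by auto
  also have "emeasure C \<dots> = emeasure (distr C borel (\<lambda>z. z n)) F"
    by (rule emeasure_distr[symmetric, OF Y]) (simp add: F_def)
  also have "\<dots> = 0"
    unfolding uniform F_def by simp
  finally have "AE x in A. emeasure (K x) F * indicator (space (cube_space n)) x = 0"
    using measurable_emeasure_kernel[OF measurable_prob_algebraD[OF K_A], of F]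
    by (subst (asm) nn_integral_0_iff_AE) (auto simp: F_def A_def)
  then have "AE x in A. emeasure (K x) F = 0"
    by (auto simp: A_def marg_first_def)
  moreover have "AE x in A. emeasure (K x) F = 0 \<longrightarrow> (AE y in K x. y \<in> {0..1})"
  proof (rule AE_I2, intro impI AE_I'[of F])
    fix x assume "x \<in> space A" and "emeasure (K x) F = 0"
    moreover have "sets (K x) = sets borel"
      using measurable_space[OF K_A \<open>x \<in> space A\<close>] by (simp add: space_prob_algebra)
    ultimately show "F \<in> null_sets (K x)"
      by (simp add: F_def null_sets_def)
  next
    fix x show "{y \<in> space (K x). y \<notin> {0..1}} \<subseteq> F"
      by (auto simp: F_def)
  qed
  ultimately show ?thesis
    unfolding A_def by eventually_elim blast
qed

lemma nn_integral_unit_interval_eq_integral: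
  fixes M :: "real measure"
  assumes "prob_space M" and sets_M: "sets M = sets borel" and AE_01: "AE y in M. y \<in> {0..1}"
  shows "(\<integral>\<^sup>+ y. ennreal y \<partial>M) = ennreal (\<integral> y. y \<partial>M)"
    and "(\<integral>\<^sup>+ y. ennreal (1 - y) \<partial>M) = ennreal (1 - (\<integral> y. y \<partial>M))"
proof -
  interpret prob_space M by fact
  have [measurable]: "(\<lambda>y. y) \<in> borel_measurable M"
    by (simp add: measurable_cong_sets[OF sets_M refl])
  have int: "integrable M (\<lambda>y. y)"
    by (rule integrable_const_bound[where B=1]) (use AE_01 in auto)
  show "(\<integral>\<^sup>+ y. ennreal y \<partial>M) = ennreal (\<integral> y. y \<partial>M)"
    by (rule nn_integral_eq_integral[OF int]) (use AE_01 in auto)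
  have "(\<integral>\<^sup>+ y. ennreal (1 - y) \<partial>M) = ennreal (\<integral> y. 1 - y \<partial>M)"
    by (rule nn_integral_eq_integral) (use int AE_01 in auto)
  also have "(\<integral> y. 1 - y \<partial>M) = 1 - (\<integral> y. y \<partial>M)"
    using int by (simp add: prob_space)
  finally show "(\<integral>\<^sup>+ y. ennreal (1 - y) \<partial>M) = ennreal (1 - (\<integral> y. y \<partial>M))" .
qed

lemma AE_markov_kernel_nn_integral_eq_regression:
  fixes n :: nat and C :: "(nat \<Rightarrow> real) measure" and K :: "(nat \<Rightarrow> real) \<Rightarrow> real measure"
  assumes C: "is_copula (Suc n) C" and K: "is_markov_kernel (Suc n) C K"
  shows "AE x in marg_first (Suc n) C. (\<integral>\<^sup>+ y. ennreal y \<partial>K x) = ennreal (regression K x)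
    \<and> (\<integral>\<^sup>+ y. ennreal (1 - y) \<partial>K x) = ennreal (1 - regression K x)"
  using AE_space AE_markov_kernel_unit_interval[OF C K]
proof eventually_elim
  case (elim x)
  then have "prob_space (K x)" "sets (K x) = sets borel"
    using measurable_space[OF markov_kernel_measurable[OF K]] by (auto simp: space_prob_algebra)
  then show ?case
    using nn_integral_unit_interval_eq_integral elim(2) by (simp add: regression_def)
qed

theorem measure_regression_far_from_half_le:
  fixes n :: nat and C :: "(nat \<Rightarrow> real) measure" and K :: "(nat \<Rightarrow> real) \<Rightarrow> real measure"
  defines "A \<equiv> marg_first (Suc n) C"
  assumes C: "is_copula (Suc n) C" and K: "is_markov_kernel (Suc n) C K" and a: "0 \<le> a" "a \<le> 1/2"
  shows "measure A {x\<in>space A. (\<forall>i<n. x i \<in> {0..1}) \<and> \<bar>regression K x - 1/2\<bar> \<ge> a}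
    \<le> min 1 (2 - 4 * a)"
proof -
  have prob_C: "prob_space C" and sets_C: "sets C = sets (cube_space (Suc n))"
    and uniform: "distr C borel (\<lambda>z. z n) = uniform_measure lborel {0..1}"
    using C by (auto simp: is_copula_def)
  interpret C: prob_space C by (rule prob_C)
  interpret A: prob_space A
    unfolding A_def by (rule prob_space_marg_first[OF prob_C sets_C])
  have Y[measurable]: "(\<lambda>z. z n) \<in> C \<rightarrow>\<^sub>M borel"
    by (rule measurable_cube_component[OF sets_C])
  have K_A: "K \<in> A \<rightarrow>\<^sub>M prob_algebra borel"
    unfolding A_def by (rule markov_kernel_measurable[OF K])
  note K_sub[measurable] = measurable_prob_algebraD[OF K_A]
  have [measurable]: "regression K \<in> borel_measurable A"
    unfolding regression_def[abs_def] by measurable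
  define S where "S = {x\<in>space A. 1/2 + a \<le> regression K x}"
  define T where "T = {x\<in>space A. regression K x \<le> 1/2 - a}"
  have S[measurable]: "S \<in> sets A" and T[measurable]: "T \<in> sets A"
    unfolding S_def T_def by measurable
  have means: "AE x in A. (\<integral>\<^sup>+ y. ennreal y \<partial>K x) = ennreal (regression K x)
      \<and> (\<integral>\<^sup>+ y. ennreal (1 - y) \<partial>K x) = ennreal (1 - regression K x)"
    unfolding A_def by (rule AE_markov_kernel_nn_integral_eq_regression[OF C K])
  have "measure A S \<le> 2 - 2 * (1/2 + a)"
    unfolding A_def
  proof (rule measure_marg_first_kernel_mean_ge[where h="\<lambda>y. y"])
    show "AE x in marg_first (Suc n) C. x \<in> S \<longrightarrow> ennreal (1/2 + a) \<le> (\<integral>\<^sup>+ y. ennreal y \<partial>K x)"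
      using means unfolding A_def by eventually_elim (auto simp: S_def intro: ennreal_leI)
  qed (use C.nn_integral_indicator_uniform_01_le(1)[OF Y _ uniform] S a prob_C sets_C K
    in \<open>auto simp: A_def\<close>)
  moreover have "measure A T \<le> 2 - 2 * (1/2 + a)"
    unfolding A_def
  proof (rule measure_marg_first_kernel_mean_ge[where h="\<lambda>y. 1 - y"])
    show "AE x in marg_first (Suc n) C. x \<in> T \<longrightarrow> ennreal (1/2 + a) \<le> (\<integral>\<^sup>+ y. ennreal (1 - y) \<partial>K x)"
      using means unfolding A_def by eventually_elim (auto simp: T_def intro: ennreal_leI)
  qed (use C.nn_integral_indicator_uniform_01_le(2)[OF Y _ uniform] T a prob_C sets_C K
    in \<open>auto simp: A_def\<close>)
  moreover have "measure A {x\<in>space A. (\<forall>i<n. x i \<in> {0..1}) \<and> \<bar>regression K x - 1/2\<bar> \<ge> a}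
      \<le> measure A (S \<union> T)"
    by (rule A.finite_measure_mono) (auto simp: S_def T_def)
  moreover have "measure A (S \<union> T) \<le> measure A S + measure A T"
    using measure_subadditive[OF S T] by simp
  ultimately show ?thesis
    by simp
qed

section \<open>Extending a measure by a kernel\<close>

definition kernel_product ::
    "nat \<Rightarrow> (nat \<Rightarrow> real) measure \<Rightarrow> ((nat \<Rightarrow> real) \<Rightarrow> real measure) \<Rightarrow> (nat \<Rightarrow> real) measure" where
  "kernel_product n A K = A \<bind> (\<lambda>x. distr (K x) (cube_space (Suc n)) (\<lambda>y. x(n := y)))"

lemma restrict_fun_upd_cube:
  "x \<in> space (cube_space n) \<Longrightarrow> restrict (x(n := y)) {..<n} = x"
  by (auto simp: space_cube_space fun_eq_iff PiE_def extensional_def)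

lemma fun_upd_in_space_cube:
  "x \<in> space (cube_space n) \<Longrightarrow> x(n := y) \<in> space (cube_space (Suc n))"
  by (auto simp: space_cube_space PiE_def extensional_def)

lemma measurable_fun_upd_cube:
  "(\<lambda>(x, y). x(n := y)) \<in> cube_space n \<Otimes>\<^sub>M borel \<rightarrow>\<^sub>M cube_space (Suc n)"
proof -
  have "(\<lambda>z. (fst z)(n := snd z)) \<in> cube_space n \<Otimes>\<^sub>M borel \<rightarrow>\<^sub>M cube_space (Suc n)"
    unfolding cube_space_def
    by (rule measurable_fun_upd[where J="{..<n}"]) (auto intro: measurable_fst'' measurable_snd'')
  then show ?thesis
    by (simp add: case_prod_beta')
qed

context
  fixes n :: nat and A :: "(nat \<Rightarrow> real) measure" and K :: "(nat \<Rightarrow> real) \<Rightarrow> real measure"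
  assumes sets_A: "sets A = sets (cube_space n)" and prob_A: "prob_space A"
    and K: "K \<in> cube_space n \<rightarrow>\<^sub>M prob_algebra borel"
begin

private lemma space_A: "space A = space (cube_space n)"
  using sets_A by (rule sets_eq_imp_space_eq)

private lemma kernel_value:
  assumes "x \<in> space A"
  shows "prob_space (K x)" and "sets (K x) = sets borel" and "space (K x) = UNIV"
    and "emeasure (K x) UNIV = 1"
proof -
  show prob: "prob_space (K x)" and sets: "sets (K x) = sets borel"
    using measurable_space[OF K, of x] assms by (auto simp: space_A space_prob_algebra)
  show space: "space (K x) = UNIV"
    using sets_eq_imp_space_eq[OF sets] by simp
  show "emeasure (K x) UNIV = 1"
    using prob_space.emeasure_space_1[OF prob] by (simp add: space)
qed

private lemma measurable_kernel_product_slice: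
  "(\<lambda>x. distr (K x) (cube_space (Suc n)) (\<lambda>y. x(n := y))) \<in> A \<rightarrow>\<^sub>M subprob_algebra (cube_space (Suc n))"
proof (rule measurable_distr2)
  show "(\<lambda>(x, y). x(n := y)) \<in> A \<Otimes>\<^sub>M borel \<rightarrow>\<^sub>M cube_space (Suc n)"
    unfolding measurable_cong_sets[OF sets_pair_measure_cong[OF sets_A refl] refl]
    by (rule measurable_fun_upd_cube)
  show "K \<in> A \<rightarrow>\<^sub>M subprob_algebra borel"
    unfolding measurable_cong_sets[OF sets_A refl] by (rule measurable_prob_algebraD[OF K])
qed

private lemma measurable_fun_upd_kernel:
  assumes "x \<in> space A"
  shows "(\<lambda>y. x(n := y)) \<in> K x \<rightarrow>\<^sub>M cube_space (Suc n)"
  unfolding measurable_cong_sets[OF kernel_value(2)[OF assms] refl]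
  using measurable_Pair2[OF measurable_fun_upd_cube, of x] assms by (simp add: space_A)

lemma sets_kernel_product: "sets (kernel_product n A K) = sets (cube_space (Suc n))"
  unfolding kernel_product_def
  by (rule sets_bind[OF _ prob_space.not_empty[OF prob_A]]) simp

lemma prob_space_kernel_product: "prob_space (kernel_product n A K)"
  unfolding kernel_product_def
proof (rule prob_space.prob_space_bind[OF prob_A _ measurable_kernel_product_slice])
  show "AE x in A. prob_space (distr (K x) (cube_space (Suc n)) (\<lambda>y. x(n := y)))"
    by (intro AE_I2 prob_space.prob_space_distr kernel_value measurable_fun_upd_kernel)
qed

lemma emeasure_kernel_product_cylinder:
  assumes B: "B \<in> sets (cube_space n)" and F: "F \<in> sets borel"
  shows "emeasure (kernel_product n A K) {z\<in>space (kernel_product n A K). restrict z {..<n} \<in> B \<and> z n \<in> F}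
    = (\<integral>\<^sup>+ x\<in>B. emeasure (K x) F \<partial>A)"
proof -
  define G where "G = {z\<in>space (cube_space (Suc n)). restrict z {..<n} \<in> B \<and> z n \<in> F}"
  note [measurable] = B F measurable_cube_restrict[OF refl, of n]
    measurable_cube_component[OF refl, where n="Suc n" and i=n]
  have G: "G \<in> sets (cube_space (Suc n))"
    unfolding G_def by measurable
  have "emeasure (kernel_product n A K) G
      = (\<integral>\<^sup>+ x. emeasure (distr (K x) (cube_space (Suc n)) (\<lambda>y. x(n := y))) G \<partial>A)"
    unfolding kernel_product_def
    by (rule emeasure_bind[OF prob_space.not_empty[OF prob_A] measurable_kernel_product_slice G])
  also have "\<dots> = (\<integral>\<^sup>+ x\<in>B. emeasure (K x) F \<partial>A)"
  proof (intro nn_integral_cong)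
    fix x assume x: "x \<in> space A"
    have "(\<lambda>y. x(n := y)) -` G \<inter> space (K x) = (if x \<in> B then F else {})"
      using x restrict_fun_upd_cube[of x n] fun_upd_in_space_cube[of x n]
      by (auto simp: G_def space_A kernel_value(3))
    then show "emeasure (distr (K x) (cube_space (Suc n)) (\<lambda>y. x(n := y))) G = emeasure (K x) F * indicator B x"
      by (simp add: emeasure_distr[OF measurable_fun_upd_kernel[OF x] G] split: split_indicator)
  qed
  finally show ?thesis
    by (simp add: G_def sets_eq_imp_space_eq[OF sets_kernel_product])
qed

lemma marg_first_kernel_product: "marg_first (Suc n) (kernel_product n A K) = A"
proof (rule measure_eqI)
  show "sets (marg_first (Suc n) (kernel_product n A K)) = sets A"
    by (simp add: sets_A)
next
  fix B assume "B \<in> sets (marg_first (Suc n) (kernel_product n A K))"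
  then have B: "B \<in> sets (cube_space n)"
    by simp
  have "emeasure (marg_first (Suc n) (kernel_product n A K)) B
      = emeasure (kernel_product n A K) {z\<in>space (kernel_product n A K). restrict z {..<n} \<in> B \<and> z n \<in> UNIV}"
    unfolding marg_first_def
    using emeasure_distr[OF measurable_cube_restrict[OF sets_kernel_product] B]
    by (simp add: vimage_def Int_def conj_commute)
  also have "\<dots> = (\<integral>\<^sup>+ x\<in>B. emeasure (K x) UNIV \<partial>A)"
    by (rule emeasure_kernel_product_cylinder[OF B]) simp
  also have "\<dots> = (\<integral>\<^sup>+ x\<in>B. 1 \<partial>A)"
    by (intro nn_integral_cong) (simp add: kernel_value)
  also have "\<dots> = emeasure A B"
    using B sets_A by simp
  finally show "emeasure (marg_first (Suc n) (kernel_product n A K)) B = emeasure A B" .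
qed

lemma is_markov_kernel_kernel_product: "is_markov_kernel (Suc n) (kernel_product n A K) K"
  unfolding is_markov_kernel_def marg_first_kernel_product
  using K emeasure_kernel_product_cylinder[folded sets_kernel_product] by simp

lemma distr_kernel_product_component:
  assumes "i < n"
  shows "distr (kernel_product n A K) borel (\<lambda>z. z i) = distr A borel (\<lambda>x. x i)"
proof -
  have "distr A borel (\<lambda>x. x i)
      = distr (distr (kernel_product n A K) (cube_space n) (\<lambda>z. restrict z {..<n})) borel (\<lambda>x. x i)"
    using marg_first_kernel_product by (simp add: marg_first_def)
  also have "\<dots> = distr (kernel_product n A K) borel (\<lambda>z. z i)"
    using assms
    by (subst distr_distr[OF measurable_cube_component[OF refl] measurable_cube_restrict[OF sets_kernel_product]])
      (auto intro!: distr_cong)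
  finally show ?thesis ..
qed

lemma emeasure_distr_kernel_product_last:
  assumes F: "F \<in> sets borel"
  shows "emeasure (distr (kernel_product n A K) borel (\<lambda>z. z n)) F = (\<integral>\<^sup>+ x. emeasure (K x) F \<partial>A)"
proof -
  have "(\<lambda>z. z n) -` F \<inter> space (kernel_product n A K)
      = {z\<in>space (kernel_product n A K). restrict z {..<n} \<in> space (cube_space n) \<and> z n \<in> F}"
    using measurable_space[OF measurable_cube_restrict[OF sets_kernel_product]] by auto
  then show ?thesis
    using emeasure_kernel_product_cylinder[OF sets.top F]
    by (simp add: emeasure_distr[OF measurable_cube_component[OF sets_kernel_product] F] space_A[symmetric])
qed

end

section \<open>Sharpness\<close>

text \<open>For \<open>p = 1/2\<close> the middle block \<open>{p..1-p}\<close> is a single point; the last branch then only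
  serves to keep every value a probability measure and is taken on a null set of \<open>t \<in> [0,1]\<close>.\<close>

definition extremal_kernel :: "real \<Rightarrow> real \<Rightarrow> real measure" where
  "extremal_kernel p t =
    (if 0 \<le> t \<and> t < p then uniform_measure lborel {1 - p..1}
     else if p \<le> t \<and> t < 2 * p then uniform_measure lborel {0..p}
     else if p < 1/2 then uniform_measure lborel {p..1 - p}
     else uniform_measure lborel {0..1})"

lemma uniform_measure_Icc_in_prob_algebra:
  fixes l h :: real assumes "l < h"
  shows "uniform_measure lborel {l..h} \<in> space (prob_algebra borel)"
  using assms by (auto simp: space_prob_algebra intro!: prob_space_uniform_measure)

lemma measurable_extremal_kernel:
  assumes "0 \<le> p" "p \<le> 1/2"
  shows "extremal_kernel p \<in> borel \<rightarrow>\<^sub>M prob_algebra borel"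
proof (cases "p = 0")
  case True
  then have "extremal_kernel p = (\<lambda>t. uniform_measure lborel {0..1})"
    by (auto simp: extremal_kernel_def fun_eq_iff)
  then show ?thesis
    by (simp add: uniform_measure_Icc_in_prob_algebra)
next
  case False
  then have "0 < p"
    using assms by simp
  moreover have "(if p < 1/2 then uniform_measure lborel {p..1 - p} else uniform_measure lborel {0..1::real})
      \<in> space (prob_algebra borel)"
    by (auto intro!: uniform_measure_Icc_in_prob_algebra)
  ultimately show ?thesis
    unfolding extremal_kernel_def[abs_def]
    by (intro measurable_If measurable_const uniform_measure_Icc_in_prob_algebra) auto
qed

lemma measurable_extremal_kernel_first_coordinate:
  assumes "0 \<le> p" "p \<le> 1/2"
  shows "(\<lambda>x. extremal_kernel p (x 0)) \<in> cube_space n \<rightarrow>\<^sub>M prob_algebra borel"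
  by (rule measurable_compose[OF measurable_cube_component[OF refl] measurable_extremal_kernel[OF assms]])

lemma integral_extremal_kernel:
  assumes "0 \<le> p" "p \<le> 1/2"
  shows "(\<integral> y. y \<partial>extremal_kernel p t) =
    (if 0 \<le> t \<and> t < p then 1 - p/2 else if p \<le> t \<and> t < 2 * p then p/2 else 1/2)"
  using assms by (auto simp: extremal_kernel_def integral_uniform_measure_Icc_id)

lemma emeasure_uniform_measure_Icc_mult_length:
  fixes l h :: real assumes "l \<le> h" and "F \<in> sets borel"
  shows "emeasure (uniform_measure lborel {l..h}) F * ennreal (h - l) = emeasure lborel ({l..h} \<inter> F)"
proof (cases "l = h")
  case True
  have "emeasure lborel ({l..h} \<inter> F) \<le> emeasure lborel {l..h}"
    by (intro emeasure_mono) auto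
  then show ?thesis
    using True by simp
next
  case False
  then have "ennreal (h - l) / ennreal (h - l) = 1"
    using assms by (simp add: divide_ennreal)
  then show ?thesis
    using assms by (simp add: ennreal_divide_times)
qed

lemma emeasure_lborel_Int_three_blocks:
  fixes F :: "real set" assumes p: "0 \<le> p" "p \<le> 1/2" and F: "F \<in> sets borel"
  shows "emeasure lborel ({1 - p..1} \<inter> F) + emeasure lborel ({0..p} \<inter> F) + emeasure lborel ({p..1 - p} \<inter> F)
    = emeasure lborel ({0..1} \<inter> F)"
proof -
  have "AE t in lborel. t \<noteq> p \<and> t \<noteq> 1 - p"
    by (intro AE_conjI AE_lborel_singleton)
  then have tiling: "AE t in lborel. indicator ({1 - p..1} \<inter> F) t + indicator ({0..p} \<inter> F) t
      + indicator ({p..1 - p} \<inter> F) t = (indicator ({0..1} \<inter> F) t :: ennreal)"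
    by eventually_elim (use p in \<open>auto split: split_indicator\<close>)
  have "emeasure lborel ({1 - p..1} \<inter> F) + emeasure lborel ({0..p} \<inter> F) + emeasure lborel ({p..1 - p} \<inter> F)
      = (\<integral>\<^sup>+ t. indicator ({1 - p..1} \<inter> F) t + indicator ({0..p} \<inter> F) t
        + indicator ({p..1 - p} \<inter> F) t \<partial>lborel)"
    using F by (simp add: nn_integral_add)
  also have "\<dots> = (\<integral>\<^sup>+ t. indicator ({0..1} \<inter> F) t \<partial>lborel)"
    by (rule nn_integral_cong_AE[OF tiling])
  finally show ?thesis
    using F by simp
qed

lemma nn_integral_extremal_kernel_uniform_01:
  fixes F :: "real set" assumes p: "0 \<le> p" "p \<le> 1/2" and F[measurable]: "F \<in> sets borel"
  shows "(\<integral>\<^sup>+ t. emeasure (extremal_kernel p t) F \<partial>uniform_measure lborel {0..1})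
    = emeasure (uniform_measure lborel {0..1}) F"
proof -
  have [measurable]: "(\<lambda>t. emeasure (extremal_kernel p t) F) \<in> borel_measurable borel"
    by (rule measurable_emeasure_kernel[OF measurable_prob_algebraD[OF measurable_extremal_kernel[OF p]] F])
  define U where "U l h = emeasure (uniform_measure lborel {l..h}) F" for l h :: real
  define middle where "middle = (if p < 1/2 then U p (1 - p) else U 0 1)"
  have "(\<integral>\<^sup>+ t. emeasure (extremal_kernel p t) F \<partial>uniform_measure lborel {0..1})
      = (\<integral>\<^sup>+ t. emeasure (extremal_kernel p t) F * indicator {0..1} t \<partial>lborel)"
    by (subst nn_integral_uniform_measure) (auto simp: divide_ennreal_def)
  also have "\<dots> = (\<integral>\<^sup>+ t. (U (1 - p) 1 * indicator {0..<p} t + U 0 p * indicator {p..<2 * p} t)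
      + middle * indicator {2 * p..1} t \<partial>lborel)"
    using p by (intro nn_integral_cong) (auto simp: extremal_kernel_def U_def middle_def split: split_indicator)
  also have "\<dots> = U (1 - p) 1 * ennreal p + U 0 p * ennreal p + middle * ennreal (1 - 2 * p)"
    using p by (simp add: nn_integral_add nn_integral_cmult_indicator)
  also have "U (1 - p) 1 * ennreal p = emeasure lborel ({1 - p..1} \<inter> F)"
    using emeasure_uniform_measure_Icc_mult_length[of "1 - p" 1 F] p by (simp add: U_def)
  also have "U 0 p * ennreal p = emeasure lborel ({0..p} \<inter> F)"
    using emeasure_uniform_measure_Icc_mult_length[of 0 p F] p by (simp add: U_def)
  also have "middle * ennreal (1 - 2 * p) = emeasure lborel ({p..1 - p} \<inter> F)"
  proof (cases "p < 1/2")
    case True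
    then show ?thesis
      using emeasure_uniform_measure_Icc_mult_length[of p "1 - p" F] by (simp add: U_def middle_def)
  next
    case False
    then have p_half: "p = 1/2"
      using p by simp
    show ?thesis
      using emeasure_uniform_measure_Icc_mult_length[of "1/2" "1/2" F] by (simp add: p_half)
  qed
  also have "emeasure lborel ({1 - p..1} \<inter> F) + emeasure lborel ({0..p} \<inter> F) + emeasure lborel ({p..1 - p} \<inter> F)
      = emeasure lborel ({0..1} \<inter> F)"
    by (rule emeasure_lborel_Int_three_blocks[OF p F])
  also have "\<dots> = emeasure (uniform_measure lborel {0..1}) F"
    by (simp add: divide_ennreal_def)
  finally show ?thesis .
qed

lemma AE_copula_in_unit_cube:
  assumes "is_copula n A"
  shows "AE x in A. \<forall>i<n. x i \<in> {0..1}"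
proof -
  have "AE x in A. \<forall>i\<in>{..<n}. x i \<in> {0..1}"
  proof (rule AE_finite_allI)
    fix i assume "i \<in> {..<n}"
    then have i: "i < n"
      by simp
    have sets_A: "sets A = sets (cube_space n)"
      and uniform: "distr A borel (\<lambda>x. x i) = uniform_measure lborel {0..1}"
      using assms i by (auto simp: is_copula_def)
    have "AE y in distr A borel (\<lambda>x. x i). y \<in> {0..1}"
      unfolding uniform by (rule AE_uniform_measureI) auto
    then show "AE x in A. x i \<in> {0..1}"
      by (subst (asm) AE_distr_iff) (use measurable_cube_component[OF sets_A] in auto)
  qed simp
  then show ?thesis
    by eventually_elim auto
qed

lemma is_copula_kernel_product_extremal:
  assumes n: "0 < n" and A: "is_copula n A" and p: "0 \<le> p" "p \<le> 1/2"
  shows "is_copula (Suc n) (kernel_product n A (\<lambda>x. extremal_kernel p (x 0)))"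
proof -
  define K where "K = (\<lambda>x :: nat \<Rightarrow> real. extremal_kernel p (x 0))"
  have sets_A: "sets A = sets (cube_space n)" and prob_A: "prob_space A"
    and uniform_A: "\<And>i. i < n \<Longrightarrow> distr A borel (\<lambda>x. x i) = uniform_measure lborel {0..1}"
    using A by (auto simp: is_copula_def)
  have K: "K \<in> cube_space n \<rightarrow>\<^sub>M prob_algebra borel"
    unfolding K_def by (rule measurable_extremal_kernel_first_coordinate[OF p])
  have "distr (kernel_product n A K) borel (\<lambda>z. z n) = uniform_measure lborel {0..1}"
  proof (rule measure_eqI)
    fix F assume "F \<in> sets (distr (kernel_product n A K) borel (\<lambda>z. z n))"
    then have F[measurable]: "F \<in> sets borel"
      by simp
    have [measurable]: "(\<lambda>t. emeasure (extremal_kernel p t) F) \<in> borel_measurable borel"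
      by (rule measurable_emeasure_kernel[OF measurable_prob_algebraD[OF measurable_extremal_kernel[OF p]] F])
    have [measurable]: "(\<lambda>x. x 0) \<in> A \<rightarrow>\<^sub>M borel"
      by (rule measurable_cube_component[OF sets_A])
    have "emeasure (distr (kernel_product n A K) borel (\<lambda>z. z n)) F
        = (\<integral>\<^sup>+ x. emeasure (extremal_kernel p (x 0)) F \<partial>A)"
      using emeasure_distr_kernel_product_last[OF sets_A prob_A K F] by (simp add: K_def)
    also have "\<dots> = (\<integral>\<^sup>+ t. emeasure (extremal_kernel p t) F \<partial>distr A borel (\<lambda>x. x 0))"
      by (subst nn_integral_distr) auto
    also have "\<dots> = emeasure (uniform_measure lborel {0..1}) F"
      using uniform_A[OF n] nn_integral_extremal_kernel_uniform_01[OF p F] by simp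
    finally show "emeasure (distr (kernel_product n A K) borel (\<lambda>z. z n)) F
        = emeasure (uniform_measure lborel {0..1}) F" .
  qed simp
  then show ?thesis
    using sets_kernel_product[OF sets_A prob_A K] prob_space_kernel_product[OF sets_A prob_A K]
      distr_kernel_product_component[OF sets_A prob_A K] uniform_A
    by (auto simp: is_copula_def K_def less_Suc_eq)
qed

text \<open>With this \<open>p\<close>, the two outer blocks deviate from \<open>1/2\<close> by \<open>1/2 - p/2 \<ge> a\<close>, and they
  are selected with probability \<open>2p = min 1 (2 - 4a)\<close>.\<close>

lemma measure_regression_extremal_kernel:
  fixes a :: real
  defines "p \<equiv> min (1/2) (1 - 2 * a)"
  assumes n: "0 < n" and A: "is_copula n A" and a: "0 \<le> a" "a \<le> 1/2"
  shows "measure A {x\<in>space A. (\<forall>i<n. x i \<in> {0..1})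
      \<and> \<bar>regression (\<lambda>x. extremal_kernel p (x 0)) x - 1/2\<bar> \<ge> a} = min 1 (2 - 4 * a)"
proof -
  have p: "0 \<le> p" "p \<le> 1/2" and outer: "a \<le> 1/2 - p/2" and mass: "2 * p = min 1 (2 - 4 * a)"
    using a unfolding p_def by (auto simp: min_def field_simps)
  have sets_A: "sets A = sets (cube_space n)" and prob_A: "prob_space A"
    and uniform_A: "distr A borel (\<lambda>x. x 0) = uniform_measure lborel {0..1}"
    using A n by (auto simp: is_copula_def)
  interpret A: prob_space A
    by (rule prob_A)
  note [measurable] = measurable_cube_component[OF sets_A]
  have cube: "AE x in A. \<forall>i<n. x i \<in> {0..1}"
    by (rule AE_copula_in_unit_cube[OF A])
  show ?thesis
  proof (cases "a = 0")
    case True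
    have "measure A {x\<in>space A. \<forall>i<n. x i \<in> {0..1}} = measure A (space A)"
      using cube by (intro measure_eq_AE) auto
    then show ?thesis
      using True A.prob_space by simp
  next
    case False
    have deviation: "a \<le> \<bar>(\<integral> y. y \<partial>extremal_kernel p t) - 1/2\<bar> \<longleftrightarrow> 0 \<le> t \<and> t < 2 * p" for t
      using integral_extremal_kernel[OF p, of t] outer p False a by (auto simp: abs_if)
    have "measure A {x\<in>space A. (\<forall>i<n. x i \<in> {0..1})
        \<and> \<bar>regression (\<lambda>x. extremal_kernel p (x 0)) x - 1/2\<bar> \<ge> a}
        = measure A {x\<in>space A. 0 \<le> x 0 \<and> x 0 < 2 * p}"
      unfolding regression_def deviation using cube by (intro measure_eq_AE) auto
    also have "\<dots> = measure (distr A borel (\<lambda>x. x 0)) {0..<2 * p}"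
      by (subst measure_distr) (auto simp: vimage_def Int_def conj_commute)
    also have "\<dots> = measure lborel ({0..1} \<inter> {0..<2 * p})"
      unfolding uniform_A by simp
    also have "{0..1} \<inter> {0..<2 * p} = {0..<2 * p}"
      using p by auto
    also have "measure lborel {0..<2 * p} = 2 * p"
      using p by simp
    finally show ?thesis
      unfolding mass .
  qed
qed

theorem exists_copula_regression_far_from_half:
  fixes A :: "(nat \<Rightarrow> real) measure" and a :: real
  assumes n: "0 < n" and A: "is_copula n A" and a: "0 \<le> a" "a \<le> 1/2"
  shows "\<exists>C K. is_copula (Suc n) C \<and> marg_first (Suc n) C = A \<and> is_markov_kernel (Suc n) C K \<and>
    measure A {x\<in>space A. (\<forall>i<n. x i \<in> {0..1}) \<and> \<bar>regression K x - 1/2\<bar> \<ge> a} = min 1 (2 - 4 * a)"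
proof -
  define p where "p = min (1/2) (1 - 2 * a)"
  define K where "K = (\<lambda>x :: nat \<Rightarrow> real. extremal_kernel p (x 0))"
  have p: "0 \<le> p" "p \<le> 1/2"
    using a unfolding p_def by (auto simp: min_def)
  have sets_A: "sets A = sets (cube_space n)" and prob_A: "prob_space A"
    using A by (auto simp: is_copula_def)
  have K: "K \<in> cube_space n \<rightarrow>\<^sub>M prob_algebra borel"
    unfolding K_def by (rule measurable_extremal_kernel_first_coordinate[OF p])
  show ?thesis
    using is_copula_kernel_product_extremal[OF n A p] marg_first_kernel_product[OF sets_A prob_A K]
      is_markov_kernel_kernel_product[OF sets_A prob_A K] measure_regression_extremal_kernel[OF n A a]
    unfolding K_def p_def by blast
qed

theorem corollary14:
  fixes d :: nat and A :: "(nat \<Rightarrow> real) measure" and a :: real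
  assumes "d \<ge> 2" and "is_copula (d - 1) A" and "0 \<le> a" and "a \<le> 1/2"
  shows "(\<forall>C K. is_copula d C \<and> marg_first d C = A \<and> is_markov_kernel d C K \<longrightarrow>
            measure A {x\<in>space A. (\<forall>i<d - 1. x i \<in> {0..1}) \<and> \<bar>regression K x - 1/2\<bar> \<ge> a}
              \<le> min 1 (2 - 4 * a))
       \<and> (\<exists>C K. is_copula d C \<and> marg_first d C = A \<and> is_markov_kernel d C K \<and>
            measure A {x\<in>space A. (\<forall>i<d - 1. x i \<in> {0..1}) \<and> \<bar>regression K x - 1/2\<bar> \<ge> a}
              = min 1 (2 - 4 * a))"
proof -
  obtain n where d: "d = Suc n" and n: "0 < n"
    using assms(1) by (cases d) auto
  show ?thesis
    unfolding d diff_Suc_1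
    using measure_regression_far_from_half_le[OF _ _ assms(3,4)]
      exists_copula_regression_far_from_half[OF n _ assms(3,4)] assms(2)
    by (auto simp: d)
qed

end
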